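(* Let $X$ be a locally convex Hausdorff space, $K\subset X$ a convex compact subset, $T:\mathscr{C}(K)\to\mathscr{C}(K)$ a Markov operator such that $T(h)=h$ for every $h\in A(K)$, $a\ge0$, and $(\mu_n)_{n\ge1}$ a sequence of Borel probability measures on $K$. Then for every $n\ge1$ and $f\in\mathscr{C}(K)$, $$\|C_n(f)-f\|_\infty\le 2\,\Omega\Big(f,\sqrt{\tfrac{4a^2+1}{n+a}}\Big).$$
   Context: $A(K)$ is the space of continuous affine functions on $K$. A Markov operator is a positive linear operator $T$ on $\mathscr{C}(K)$ with $T(\mathbf{1})=\mathbf{1}$; $(\tilde\mu_x^T)_{x\in K}$ are the Borel probability measures with $\int_K f\,d\tilde\mu_x^T=T(f)(x)$. $C_n(f)(x)=\int_K\cdots\int_K f\big(\frac{x_1+\dots+x_n+a x_{n+1}}{n+a}\big)\,d\tilde\mu_x^T(x_1)\cdots d\tilde\mu_x^T(x_n)\,d\mu_n(x_{n+1})$. $L(K)=\{\varphi|_K:\varphi\in X'\}$ ($X'$ the dual of $X$). For $m\ge1$, $h_1,\dots,h_m\in L(K)$, $\delta>0$, let $H(h_1,\dots,h_m,\delta)=\{(x,y)\in K\times K:\sum_{j=1}^m(h_j(x)-h_j(y))^2\le\delta^2\}$ and, for bounded $f:K\to\mathbf{R}$, $\omega(f;h_1,\dots,h_m,\delta)=\sup\{|f(x)-f(y)|:(x,y)\in H(h_1,\dots,h_m,\delta)\}$. The total modulus of continuity is $$\Omega(f,\delta)=\inf\Big\{\omega(f;h_1,\dots,h_m,\delta): m\ge1,\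 h_1,\dots,h_m\in L(K),\ \Big\|\sum_{j=1}^m h_j^2\Big\|_\infty=1\Big\}.$$ *)

theory Defs
  imports "HOL-Probability.Probability"
begin

text \<open>A real topological vector space that is Hausdorff, with (jointly) continuous
  addition and scalar multiplication (stated via neighbourhoods, i.e. continuity
  w.r.t. the product topology), and a base of convex open sets.\<close>
class lc_tvs = real_vector + t2_space +
  assumes continuous_add_lc: "open U \<Longrightarrow> x + y \<in> U \<Longrightarrow>
     \<exists>A B. open A \<and> open B \<and> x \<in> A \<and> y \<in> B \<and> (\<forall>u\<in>A. \<forall>v\<in>B. u + v \<in> U)"
  assumes continuous_scaleR_lc: "open U \<Longrightarrow> c *\<^sub>R x \<in> U \<Longrightarrow>
     \<exists>e>0. \<exists>B. open B \<and> x \<in> B \<and> (\<forall>d. \<bar>d - c\<bar> < e \<longrightarrow> (\<forall>v\<in>B. d *\<^sub>R v \<in> U))"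
  assumes convex_open_base: "open U \<Longrightarrow> x \<in> U \<Longrightarrow> \<exists>V. open V \<and> (\<forall>u\<in>V. \<forall>v\<in>V. \<forall>t::real. 0 \<le> t \<and> t \<le> 1 \<longrightarrow> (1 - t) *\<^sub>R u + t *\<^sub>R v \<in> V) \<and> x \<in> V \<and> V \<subseteq> U"

definition dual_space :: "('a::lc_tvs \<Rightarrow> real) set" where
  "dual_space = {\<phi>. linear \<phi> \<and> continuous_on UNIV \<phi>}"

definition Lfun :: "'a::lc_tvs set \<Rightarrow> ('a \<Rightarrow> real) set" where
  "Lfun K = {h. \<exists>\<phi>\<in>dual_space. \<forall>x\<in>K. h x = \<phi> x}"

definition affine_cont :: "'a::{real_vector,topological_space} set \<Rightarrow> ('a \<Rightarrow> real) \<Rightarrow> bool" where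
  "affine_cont K h \<longleftrightarrow> continuous_on K h \<and>
     (\<forall>x\<in>K. \<forall>y\<in>K. \<forall>t::real. 0 \<le> t \<and> t \<le> 1 \<longrightarrow>
        h (t *\<^sub>R x + (1 - t) *\<^sub>R y) = t * h x + (1 - t) * h y)"

text \<open>Markov operator on C(K) (functions are identified when they agree on K).\<close>
definition markov_operator :: "'a::topological_space set \<Rightarrow> (('a \<Rightarrow> real) \<Rightarrow> ('a \<Rightarrow> real)) \<Rightarrow> bool" where
  "markov_operator K T \<longleftrightarrow>
     (\<forall>f. continuous_on K f \<longrightarrow> continuous_on K (T f)) \<and>
     (\<forall>f g. continuous_on K f \<longrightarrow> (\<forall>x\<in>K. f x = g x) \<longrightarrow> (\<forall>x\<in>K. T f x = T g x)) \<and>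
     (\<forall>f g. continuous_on K f \<longrightarrow> continuous_on K g \<longrightarrow>
        (\<forall>x\<in>K. T (\<lambda>y. f y + g y) x = T f x + T g x)) \<and>
     (\<forall>c f. continuous_on K f \<longrightarrow> (\<forall>x\<in>K. T (\<lambda>y. c * f y) x = c * T f x)) \<and>
     (\<forall>f. continuous_on K f \<longrightarrow> (\<forall>x\<in>K. 0 \<le> f x) \<longrightarrow> (\<forall>x\<in>K. 0 \<le> T f x)) \<and>
     (\<forall>x\<in>K. T (\<lambda>_. 1) x = 1)"

definition borel_prob_on :: "'a::topological_space set \<Rightarrow> 'a measure \<Rightarrow> bool" where
  "borel_prob_on K M \<longleftrightarrow> prob_space M \<and> sets M = sets (restrict_space borel K)"

text \<open>Iterated integral: iter_int M n g = \<integral>...\<integral> g(x_1+...+x_n) dM(x_1)...dM(x_n).\<close>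
primrec iter_int :: "'a::real_vector measure \<Rightarrow> nat \<Rightarrow> ('a \<Rightarrow> real) \<Rightarrow> real" where
  "iter_int M 0 g = g 0"
| "iter_int M (Suc k) g = (\<integral>y. iter_int M k (\<lambda>s. g (y + s)) \<partial>M)"

text \<open>The operator C_n, with muT x the representing measure of T at x and mun = \<mu>_n.\<close>
definition Cop :: "('a::real_vector \<Rightarrow> 'a measure) \<Rightarrow> 'a measure \<Rightarrow> real \<Rightarrow> nat \<Rightarrow> ('a \<Rightarrow> real) \<Rightarrow> 'a \<Rightarrow> real" where
  "Cop muT mun a n f x =
     (\<integral>z. iter_int (muT x) n (\<lambda>s. f ((1 / (real n + a)) *\<^sub>R (s + a *\<^sub>R z))) \<partial>mun)"

text \<open>Sup norm on K (extended-real valued; sup over the empty set is -\<infinity>).\<close>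
definition sup_norm_on :: "'a set \<Rightarrow> ('a \<Rightarrow> real) \<Rightarrow> ereal" where
  "sup_norm_on K g = (SUP x\<in>K. ereal \<bar>g x\<bar>)"

definition Hset :: "'a set \<Rightarrow> (nat \<Rightarrow> 'a \<Rightarrow> real) \<Rightarrow> nat \<Rightarrow> real \<Rightarrow> ('a \<times> 'a) set" where
  "Hset K h m \<delta> = {(x, y). x \<in> K \<and> y \<in> K \<and> (\<Sum>j<m. (h j x - h j y)\<^sup>2) \<le> \<delta>\<^sup>2}"

definition omega_mod :: "'a set \<Rightarrow> ('a \<Rightarrow> real) \<Rightarrow> (nat \<Rightarrow> 'a \<Rightarrow> real) \<Rightarrow> nat \<Rightarrow> real \<Rightarrow> ereal" where
  "omega_mod K f h m \<delta> = (SUP p\<in>Hset K h m \<delta>. ereal \<bar>f (fst p) - f (snd p)\<bar>)"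

text \<open>Total modulus of continuity (infimum over the empty set is +\<infinity>).\<close>
definition Omega :: "'a::lc_tvs set \<Rightarrow> ('a \<Rightarrow> real) \<Rightarrow> real \<Rightarrow> ereal" where
  "Omega K f \<delta> = (INF mh\<in>{(m, h). 1 \<le> m \<and> (\<forall>j<m. h j \<in> Lfun K) \<and>
                       sup_norm_on K (\<lambda>x. \<Sum>j<m. (h j x)\<^sup>2) = 1}.
                   omega_mod K f (snd mh) (fst mh) \<delta>)"

end

theory Submission
  imports Defs
begin

text \<open>Fix an admissible family \<open>h\<^sub>1, \<dots>, h\<^sub>m\<close> and let \<open>w = \<omega>(f; h, \<delta>)\<close>. Cutting the segment
  from \<open>x\<close> to \<open>y\<close> into \<open>\<lceil>d/\<delta>\<rceil>\<close> pieces, where \<open>d\<^sup>2 = \<Sum>(h\<^sub>j y - h\<^sub>j x)\<^sup>2\<close>, gives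
  \<open>|f y - f x| \<le> w (1 + d\<^sup>2/\<delta>\<^sup>2)\<close>. As \<open>C\<^sub>n\<close> is positive and unital, applying it at \<open>x\<close> yields
  \<open>|C\<^sub>n f x - f x| \<le> w + w/\<delta>\<^sup>2 \<cdot> C\<^sub>n(\<Sum>(h\<^sub>j - h\<^sub>j x)\<^sup>2)(x)\<close>. Since \<open>T\<close> fixes the \<open>h\<^sub>j\<close>, the measures
  \<open>\<mu>\<^sub>x\<^sup>T\<close> have barycentre \<open>x\<close>, so this quadratic term equals
  \<open>(a\<^sup>2 \<integral>\<Sum>(h\<^sub>j z - h\<^sub>j x)\<^sup>2 d\<mu>\<^sub>n(z) + n \<Sum> Var(h\<^sub>j)) / (n+a)\<^sup>2 \<le> (4a\<^sup>2 + n)/(n+a)\<^sup>2 \<le> \<delta>\<^sup>2\<close>.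
  Hence \<open>|C\<^sub>n f - f| \<le> 2w\<close>, and one takes the infimum over admissible families.\<close>

lemma space_eq_restrict_borel:
  assumes "sets M = sets (restrict_space borel K)"
  shows "space M = K"
  using sets_eq_imp_space_eq[OF assms] by (simp add: space_restrict_space)

lemma integrable_continuous_on_compact:
  fixes g :: "'a::topological_space \<Rightarrow> real"
  assumes g: "continuous_on K g" and K: "compact K"
    and M: "finite_measure M" "sets M = sets (restrict_space borel K)"
  shows "integrable M g"
proof -
  have "g \<in> borel_measurable M"
    using measurable_cong_sets[OF M(2) refl] borel_measurable_continuous_on_restrict[OF g] by blast
  moreover obtain B where "\<forall>y\<in>g ` K. norm y \<le> B"
    using compact_imp_bounded[OF compact_continuous_image[OF g K]] bounded_iff by metis
  then have "AE x in M. norm (g x) \<le> B"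
    using space_eq_restrict_borel[OF M(2)] by (intro AE_I2) auto
  ultimately show ?thesis using finite_measure.integrable_const_bound[OF M(1)] by blast
qed

lemma abs_integral_sub_le:
  fixes F G :: "'b \<Rightarrow> real"
  assumes "prob_space M" "integrable M F" "integrable M G"
    and "\<And>t. t \<in> space M \<Longrightarrow> \<bar>F t - c\<bar> \<le> G t"
  shows "\<bar>(\<integral>t. F t \<partial>M) - c\<bar> \<le> (\<integral>t. G t \<partial>M)"
proof -
  interpret prob_space M by fact
  have "\<bar>(\<integral>t. F t \<partial>M) - c\<bar> = \<bar>\<integral>t. F t - c \<partial>M\<bar>"
    using assms(2) by (simp add: prob_space)
  also have "\<dots> \<le> (\<integral>t. \<bar>F t - c\<bar> \<partial>M)" by (rule integral_abs_bound)
  also have "\<dots> \<le> (\<integral>t. G t \<partial>M)"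
    using assms by (intro integral_mono) auto
  finally show ?thesis .
qed

text \<open>The class \<open>lc_tvs\<close> is not an instance of \<open>topological_monoid_add\<close>, so the library's
  continuity rules for \<open>+\<close> and \<open>*\<^sub>R\<close> have to be re-derived from its axioms.\<close>

lemma continuous_on_add_lc:
  fixes f g :: "'b::topological_space \<Rightarrow> 'a::lc_tvs"
  assumes "continuous_on S f" "continuous_on S g"
  shows "continuous_on S (\<lambda>x. f x + g x)"
proof -
  have "continuous_on UNIV (\<lambda>p::'a \<times> 'a. fst p + snd p)"
    unfolding continuous_on_open_vimage[OF open_UNIV]
  proof (intro allI impI)
    fix U :: "'a set" assume U: "open U"
    show "open ((\<lambda>p. fst p + snd p) -` U \<inter> UNIV)"
    proof (rule open_prod_intro)
      fix p assume "p \<in> (\<lambda>p::'a \<times> 'a. fst p + snd p) -` U \<inter> UNIV"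
      then obtain A B where "open A" "open B" "fst p \<in> A" "snd p \<in> B" "\<forall>u\<in>A. \<forall>v\<in>B. u + v \<in> U"
        using continuous_add_lc[OF U, of "fst p" "snd p"] by auto
      then show "\<exists>A B. open A \<and> open B \<and> p \<in> A \<times> B \<and> A \<times> B \<subseteq> (\<lambda>p. fst p + snd p) -` U \<inter> UNIV"
        by (intro exI[of _ A] exI[of _ B]) (auto simp: mem_Times_iff)
    qed
  qed
  from continuous_on_compose2[OF this continuous_on_Pair[OF assms]] show ?thesis by simp
qed

lemma continuous_on_scaleR_lc:
  fixes f :: "'b::topological_space \<Rightarrow> 'a::lc_tvs"
  assumes "continuous_on S f"
  shows "continuous_on S (\<lambda>x. c *\<^sub>R f x)"
proof -
  have "continuous_on UNIV (\<lambda>x::'a. c *\<^sub>R x)"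
    unfolding continuous_on_open_vimage[OF open_UNIV]
  proof (intro allI impI)
    fix U :: "'a set" assume U: "open U"
    show "open ((\<lambda>x. c *\<^sub>R x) -` U \<inter> UNIV)"
    proof (subst open_subopen, intro ballI)
      fix x assume "x \<in> (\<lambda>x. c *\<^sub>R x) -` U \<inter> UNIV"
      then obtain e B where "open B" "x \<in> B" "\<forall>d. \<bar>d - c\<bar> < e \<longrightarrow> (\<forall>v\<in>B. d *\<^sub>R v \<in> U)"
        "e > 0" using continuous_scaleR_lc[OF U, of c x] by auto
      then show "\<exists>T. open T \<and> x \<in> T \<and> T \<subseteq> (\<lambda>x. c *\<^sub>R x) -` U \<inter> UNIV"
        by (intro exI[of _ B]) auto
    qed
  qed
  from continuous_on_compose2[OF this assms] show ?thesis by simp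
qed

lemma continuous_on_integral_parametric:
  fixes H :: "'a::topological_space \<times> 'b::topological_space \<Rightarrow> real"
  assumes H: "continuous_on (A \<times> K) H" and K: "compact K"
    and M: "prob_space M" "sets M = sets (restrict_space borel K)"
  shows "continuous_on A (\<lambda>y. \<integral>t. H (y, t) \<partial>M)"
  unfolding continuous_on_def
proof (intro ballI tendstoI)
  fix y e assume y: "y \<in> A" and e: "(e::real) > 0"
  have int: "integrable M (\<lambda>t. H (y', t))" if "y' \<in> A" for y'
  proof -
    have "continuous_on K (\<lambda>t. H (y', t))"
      using that by (intro continuous_on_compose2[OF H]) (auto intro: continuous_intros)
    then show ?thesis
      using integrable_continuous_on_compact K M prob_space_def by blast
  qed
  obtain U where U: "y \<in> U" "open U" "\<forall>y'\<in>U \<inter> A. \<forall>t\<in>K. dist (H (y', t)) (H (y, t)) \<le> e / 2"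
    using continuous_on_prod_compactE[OF H K y, of "e / 2"] e by auto
  have "dist (\<integral>t. H (y', t) \<partial>M) (\<integral>t. H (y, t) \<partial>M) < e" if "y' \<in> U" "y' \<in> A" for y'
  proof -
    interpret prob_space M by (fact M(1))
    have "\<bar>(\<integral>t. H (y', t) - H (y, t) \<partial>M) - 0\<bar> \<le> (\<integral>t. e / 2 \<partial>M)"
      using U(3) that space_eq_restrict_borel[OF M(2)] int y
      by (intro abs_integral_sub_le[OF M(1)]) (auto simp: dist_real_def)
    then show ?thesis using e int[OF y] int[OF \<open>y' \<in> A\<close>] by (simp add: dist_real_def prob_space)
  qed
  then show "\<forall>\<^sub>F y' in at y within A. dist (\<integral>t. H (y', t) \<partial>M) (\<integral>t. H (y, t) \<partial>M) < e"
    unfolding eventually_at_topological using U(1,2) by blast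
qed

text \<open>The \<open>n\<close>-fold Minkowski sum \<open>K + \<dots> + K\<close>: the range of \<open>s = x\<^sub>1 + \<dots> + x\<^sub>n\<close> in \<open>C\<^sub>n\<close>.\<close>

primrec minkowski_power :: "'a::real_vector set \<Rightarrow> nat \<Rightarrow> 'a set" where
  "minkowski_power K 0 = {0}"
| "minkowski_power K (Suc k) = K + minkowski_power K k"

lemma scaled_minkowski_power_mem:
  fixes K :: "'a::real_vector set"
  assumes K: "convex K" and z: "z \<in> K" and c: "0 \<le> c"
  shows "s \<in> minkowski_power K k \<Longrightarrow> 0 < real k + c \<Longrightarrow>
    (1 / (real k + c)) *\<^sub>R (s + c *\<^sub>R z) \<in> K"
proof (induction k arbitrary: s)
  case 0
  then show ?case using z by simp
next
  case (Suc k)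
  then obtain t s' where ts: "t \<in> K" "s' \<in> minkowski_power K k" "s = t + s'"
    by (auto elim: set_plus_elim)
  show ?case
  proof (cases "real k + c = 0")
    case True
    then have "k = 0" "c = 0" using c by auto
    then show ?thesis using ts by simp
  next
    case False
    then have kc: "0 < real k + c" using c by linarith
    define u where "u = 1 / (real (Suc k) + c)"
    define v where "v = (real k + c) / (real (Suc k) + c)"
    have uv: "u \<ge> 0" "v \<ge> 0" "u + v = 1" using kc by (auto simp: u_def v_def field_simps)
    have "u *\<^sub>R t + v *\<^sub>R ((1 / (real k + c)) *\<^sub>R (s' + c *\<^sub>R z)) \<in> K"
      using convexD[OF K ts(1) Suc.IH[OF ts(2) kc] uv] .
    moreover have "u *\<^sub>R t + v *\<^sub>R ((1 / (real k + c)) *\<^sub>R (s' + c *\<^sub>R z)) =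
        (1 / (real (Suc k) + c)) *\<^sub>R (s + c *\<^sub>R z)"
      using kc by (simp add: u_def v_def ts(3) scaleR_add_right)
    ultimately show ?thesis by simp
  qed
qed

lemma continuous_on_iter_int:
  fixes M :: "'a::lc_tvs measure" and g :: "'a \<Rightarrow> real"
  assumes K: "compact K" and M: "prob_space M" "sets M = sets (restrict_space borel K)"
    and g: "continuous_on (A + minkowski_power K k) g"
  shows "continuous_on A (\<lambda>y. iter_int M k (\<lambda>s. g (y + s)))"
  using g
proof (induction k arbitrary: A g)
  case 0
  have "A + {0} = A" by (metis add.right_neutral set_zero)
  with 0 show ?case by simp
next
  case (Suc k)
  define F where "F w = iter_int M k (\<lambda>s. g (w + s))" for w
  have "continuous_on ((A + K) + minkowski_power K k) g"
    using Suc.prems by (simp add: add.assoc)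
  then have F: "continuous_on (A + K) F"
    unfolding F_def by (rule Suc.IH)
  have "continuous_on (A \<times> K) (\<lambda>p. fst p + snd p)"
    by (intro continuous_on_add_lc continuous_intros)
  moreover have "(\<lambda>p. fst p + snd p) ` (A \<times> K) \<subseteq> A + K" by auto
  ultimately have "continuous_on (A \<times> K) (\<lambda>p. F (fst p + snd p))"
    by (rule continuous_on_compose2[OF F])
  then have "continuous_on A (\<lambda>y. \<integral>t. F (y + t) \<partial>M)"
    using continuous_on_integral_parametric[OF _ K M] by fastforce
  then show ?case by (simp add: F_def add.assoc)
qed

lemma iter_int_abs_sub_le:
  fixes M :: "'a::lc_tvs measure" and F G :: "'a \<Rightarrow> real"
  assumes K: "compact K" and M: "prob_space M" "sets M = sets (restrict_space borel K)"
  shows "continuous_on (minkowski_power K k) F \<Longrightarrow> continuous_on (minkowski_power K k) G \<Longrightarrow>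
    (\<And>s. s \<in> minkowski_power K k \<Longrightarrow> \<bar>F s - c\<bar> \<le> G s) \<Longrightarrow>
    \<bar>iter_int M k F - c\<bar> \<le> iter_int M k G"
proof (induction k arbitrary: F G)
  case 0
  then show ?case by simp
next
  case (Suc k)
  have shift: "continuous_on (minkowski_power K k) (\<lambda>s. H (t + s))"
    if "continuous_on (minkowski_power K (Suc k)) H" "t \<in> K" for H and t
  proof (rule continuous_on_compose2[OF that(1)])
    show "continuous_on (minkowski_power K k) (\<lambda>s. t + s)"
      by (intro continuous_on_add_lc continuous_intros)
    show "(\<lambda>s. t + s) ` minkowski_power K k \<subseteq> minkowski_power K (Suc k)"
      using that(2) by auto
  qed
  have int: "integrable M (\<lambda>t. iter_int M k (\<lambda>s. H (t + s)))"
    if "continuous_on (minkowski_power K (Suc k)) H" for H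
    using that continuous_on_iter_int[OF K M, of K k H] M prob_space_def
    by (auto intro: integrable_continuous_on_compact[OF _ K])
  have "\<bar>iter_int M k (\<lambda>s. F (t + s)) - c\<bar> \<le> iter_int M k (\<lambda>s. G (t + s))" if "t \<in> K" for t
    using that Suc.prems by (intro Suc.IH shift) auto
  then show ?case
    using Suc.prems(1,2) space_eq_restrict_borel[OF M(2)]
    by (auto intro!: abs_integral_sub_le[OF M(1)] int)
qed

lemma integral_shifted_square:
  fixes \<phi> :: "'b \<Rightarrow> real"
  assumes "prob_space M" "integrable M \<phi>" "integrable M (\<lambda>t. (\<phi> t)\<^sup>2)"
  shows "(\<integral>t. (\<phi> t + c)\<^sup>2 \<partial>M) =
    ((\<integral>t. \<phi> t \<partial>M) + c)\<^sup>2 + ((\<integral>t. (\<phi> t)\<^sup>2 \<partial>M) - (\<integral>t. \<phi> t \<partial>M)\<^sup>2)"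
proof -
  interpret prob_space M by fact
  have "(\<lambda>t. (\<phi> t + c)\<^sup>2) = (\<lambda>t. (\<phi> t)\<^sup>2 + 2 * c * \<phi> t + c\<^sup>2)"
    by (simp add: power2_eq_square algebra_simps)
  then have "(\<integral>t. (\<phi> t + c)\<^sup>2 \<partial>M) = (\<integral>t. (\<phi> t)\<^sup>2 \<partial>M) + 2 * c * (\<integral>t. \<phi> t \<partial>M) + c\<^sup>2"
    using assms(2,3) by (simp add: prob_space)
  then show ?thesis by (simp add: power2_eq_square algebra_simps)
qed

lemma iter_int_quadratic:
  fixes \<phi> :: "nat \<Rightarrow> 'a::real_vector \<Rightarrow> real"
  assumes M: "prob_space M" and lin: "\<And>j. j < m \<Longrightarrow> linear (\<phi> j)"
    and int1: "\<And>j. j < m \<Longrightarrow> integrable M (\<phi> j)"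
    and int2: "\<And>j. j < m \<Longrightarrow> integrable M (\<lambda>t. (\<phi> j t)\<^sup>2)"
  shows "iter_int M k (\<lambda>s. \<alpha> + \<beta> * (\<Sum>j<m. (\<phi> j s + b j)\<^sup>2)) =
    \<alpha> + \<beta> * (\<Sum>j<m. (real k * (\<integral>t. \<phi> j t \<partial>M) + b j)\<^sup>2
      + real k * ((\<integral>t. (\<phi> j t)\<^sup>2 \<partial>M) - (\<integral>t. \<phi> j t \<partial>M)\<^sup>2))"
proof (induction k arbitrary: b)
  case 0
  then show ?case by (simp add: linear_0[OF lin])
next
  case (Suc k)
  interpret prob_space M by fact
  define mean where "mean j = (\<integral>t. \<phi> j t \<partial>M)" for j
  define var where "var j = (\<integral>t. (\<phi> j t)\<^sup>2 \<partial>M) - (mean j)\<^sup>2" for j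
  define Q where "Q t = (\<Sum>j<m. (\<phi> j t + (real k * mean j + b j))\<^sup>2 + real k * var j)" for t
  have "iter_int M k (\<lambda>s. \<alpha> + \<beta> * (\<Sum>j<m. (\<phi> j (t + s) + b j)\<^sup>2)) = \<alpha> + \<beta> * Q t" for t
  proof -
    have "iter_int M k (\<lambda>s. \<alpha> + \<beta> * (\<Sum>j<m. (\<phi> j (t + s) + b j)\<^sup>2)) =
          iter_int M k (\<lambda>s. \<alpha> + \<beta> * (\<Sum>j<m. (\<phi> j s + (\<phi> j t + b j))\<^sup>2))"
      using lin by (intro arg_cong[where f="iter_int M k"] ext sum.cong
          arg_cong[where f="\<lambda>x. \<alpha> + \<beta> * x"]) (auto simp: linear_add algebra_simps)
    also have "\<dots> = \<alpha> + \<beta> * (\<Sum>j<m. (real k * mean j + (\<phi> j t + b j))\<^sup>2 + real k * var j)"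
      unfolding mean_def var_def by (rule Suc.IH)
    also have "\<dots> = \<alpha> + \<beta> * Q t"
      unfolding Q_def by (simp add: add_ac)
    finally show ?thesis .
  qed
  moreover have "integrable M Q"
  proof -
    have "(\<lambda>t. (\<phi> j t + c)\<^sup>2) = (\<lambda>t. (\<phi> j t)\<^sup>2 + 2 * c * \<phi> j t + c\<^sup>2)" for j c
      by (simp add: power2_eq_square algebra_simps)
    then show ?thesis
      unfolding Q_def using int1 int2 by (auto intro!: Bochner_Integration.integrable_sum)
  qed
  ultimately have "iter_int M (Suc k) (\<lambda>s. \<alpha> + \<beta> * (\<Sum>j<m. (\<phi> j s + b j)\<^sup>2)) = \<alpha> + \<beta> * (\<integral>t. Q t \<partial>M)"
    by (simp add: prob_space)
  also have "(\<integral>t. Q t \<partial>M) = (\<Sum>j<m. (real (Suc k) * mean j + b j)\<^sup>2 + real (Suc k) * var j)"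
    unfolding Q_def using int1 int2
    by (simp add: integral_shifted_square[OF M] mean_def[symmetric] var_def prob_space
        power2_eq_square algebra_simps)
  finally show ?case by (simp add: mean_def var_def)
qed

lemma abs_diff_le_segment_steps:
  fixes \<phi> :: "nat \<Rightarrow> 'a::real_vector \<Rightarrow> real" and f :: "'a \<Rightarrow> real"
  assumes K: "convex K" and lin: "\<And>j. j < m \<Longrightarrow> linear (\<phi> j)"
    and modulus: "\<And>u v. u \<in> K \<Longrightarrow> v \<in> K \<Longrightarrow> (\<Sum>j<m. (\<phi> j u - \<phi> j v)\<^sup>2) \<le> \<delta>\<^sup>2 \<Longrightarrow> \<bar>f u - f v\<bar> \<le> w"
    and x: "x \<in> K" and p: "p \<in> K" and N: "0 < N"
    and dist: "(\<Sum>j<m. (\<phi> j p - \<phi> j x)\<^sup>2) \<le> (real N * \<delta>)\<^sup>2"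
  shows "\<bar>f p - f x\<bar> \<le> real N * w"
proof -
  define q where "q i = (1 - real i / real N) *\<^sub>R x + (real i / real N) *\<^sub>R p" for i
  have qK: "q i \<in> K" if "i \<le> N" for i
    using that N convexD[OF K x p, of "1 - real i / real N" "real i / real N"]
    by (simp add: q_def divide_le_eq_1)
  have "\<phi> j (q (Suc i)) - \<phi> j (q i) = (\<phi> j p - \<phi> j x) / real N" if "j < m" for i j
    using lin[OF that] N by (simp add: q_def linear_add linear_cmul field_simps)
  then have "(\<Sum>j<m. (\<phi> j (q (Suc i)) - \<phi> j (q i))\<^sup>2) = (\<Sum>j<m. (\<phi> j p - \<phi> j x)\<^sup>2) / (real N)\<^sup>2"
    for i by (simp add: sum_divide_distrib power_divide)
  also have "\<dots> \<le> \<delta>\<^sup>2"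
    using dist N by (simp add: divide_le_eq power_mult_distrib mult.commute)
  finally have step: "\<bar>f (q (Suc i)) - f (q i)\<bar> \<le> w" if "i < N" for i
    using that by (intro modulus qK) auto
  have "q 0 = x" "q N = p" using N by (auto simp: q_def)
  then have "\<bar>f p - f x\<bar> = \<bar>\<Sum>i<N. f (q (Suc i)) - f (q i)\<bar>"
    using sum_lessThan_telescope[of "\<lambda>i. f (q i)" N] by simp
  also have "\<dots> \<le> (\<Sum>i<N. \<bar>f (q (Suc i)) - f (q i)\<bar>)" by (rule sum_abs)
  also have "\<dots> \<le> real N * w" using step sum_mono[of "{..<N}" _ "\<lambda>_. w"] by simp
  finally show ?thesis .
qed

lemma abs_diff_le_modulus_quadratic:
  fixes \<phi> :: "nat \<Rightarrow> 'a::real_vector \<Rightarrow> real" and f :: "'a \<Rightarrow> real"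
  assumes K: "convex K" and lin: "\<And>j. j < m \<Longrightarrow> linear (\<phi> j)"
    and modulus: "\<And>u v. u \<in> K \<Longrightarrow> v \<in> K \<Longrightarrow> (\<Sum>j<m. (\<phi> j u - \<phi> j v)\<^sup>2) \<le> \<delta>\<^sup>2 \<Longrightarrow> \<bar>f u - f v\<bar> \<le> w"
    and \<delta>: "0 < \<delta>" and x: "x \<in> K" and p: "p \<in> K"
  shows "\<bar>f p - f x\<bar> \<le> w * (1 + (\<Sum>j<m. (\<phi> j p - \<phi> j x)\<^sup>2) / \<delta>\<^sup>2)"
proof -
  define D where "D = (\<Sum>j<m. (\<phi> j p - \<phi> j x)\<^sup>2)"
  define t where "t = sqrt D / \<delta>"
  define N where "N = max 1 (nat \<lceil>t\<rceil>)"
  have "0 \<le> D" unfolding D_def by (intro sum_nonneg) auto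
  then have t: "0 \<le> t" "D = (t * \<delta>)\<^sup>2" using \<delta> by (auto simp: t_def power_mult_distrib)
  have w: "0 \<le> w" using modulus[OF x x] by simp
  have "t \<le> real N" unfolding N_def by linarith
  then have "D \<le> (real N * \<delta>)\<^sup>2"
    using t \<delta> by (auto intro: power_mono mult_right_mono)
  then have "\<bar>f p - f x\<bar> \<le> real N * w"
    using abs_diff_le_segment_steps[where \<phi>=\<phi> and \<delta>=\<delta> and f=f and w=w and N=N, OF K lin modulus x p]
    by (simp add: N_def D_def)
  also have "real N \<le> 1 + t\<^sup>2"
  proof (cases "t \<le> 1")
    case True
    then show ?thesis by (simp add: N_def)
  next
    case False
    then have "t \<le> t\<^sup>2" by (simp add: power2_eq_square)
    then show ?thesis using False by (simp add: N_def) linarith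
  qed
  then have "real N * w \<le> (1 + t\<^sup>2) * w" using w by (rule mult_right_mono)
  also have "(1 + t\<^sup>2) * w = w * (1 + D / \<delta>\<^sup>2)"
    using t \<delta> by (simp add: power_mult_distrib)
  finally show ?thesis by (simp add: D_def)
qed

lemma continuous_on_Cop_integrand:
  fixes M :: "'a::lc_tvs measure" and g :: "'a \<Rightarrow> real"
  assumes K: "convex K" "compact K" and M: "prob_space M" "sets M = sets (restrict_space borel K)"
    and a: "0 \<le> a" "0 < real n + a" and g: "continuous_on K g"
  shows "continuous_on K (\<lambda>z. iter_int M n (\<lambda>s. g ((1 / (real n + a)) *\<^sub>R (s + a *\<^sub>R z))))"
proof -
  define A where "A = (\<lambda>z. a *\<^sub>R z) ` K"
  have "continuous_on (A + minkowski_power K n) (\<lambda>v. g ((1 / (real n + a)) *\<^sub>R v))"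
  proof (rule continuous_on_compose2[OF g])
    show "continuous_on (A + minkowski_power K n) (\<lambda>v. (1 / (real n + a)) *\<^sub>R v)"
      by (intro continuous_on_scaleR_lc continuous_intros)
    show "(\<lambda>v. (1 / (real n + a)) *\<^sub>R v) ` (A + minkowski_power K n) \<subseteq> K"
      using scaled_minkowski_power_mem[OF K(1) _ a(1) _ a(2)]
      by (auto simp: A_def set_plus_def add.commute)
  qed
  then have "continuous_on A (\<lambda>y. iter_int M n (\<lambda>s. g ((1 / (real n + a)) *\<^sub>R (y + s))))"
    by (rule continuous_on_iter_int[OF K(2) M])
  then have "continuous_on K (\<lambda>z. iter_int M n (\<lambda>s. g ((1 / (real n + a)) *\<^sub>R (a *\<^sub>R z + s))))"
    by (rule continuous_on_compose2) (auto simp: A_def intro: continuous_on_scaleR_lc continuous_intros)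
  then show ?thesis by (simp add: add.commute)
qed

lemma abs_Cop_sub_le:
  fixes muT :: "'a::lc_tvs \<Rightarrow> 'a measure" and F G :: "'a \<Rightarrow> real"
  assumes K: "convex K" "compact K"
    and M: "prob_space (muT x)" "sets (muT x) = sets (restrict_space borel K)"
    and Mz: "prob_space Mz" "sets Mz = sets (restrict_space borel K)"
    and a: "0 \<le> a" "0 < real n + a"
    and F: "continuous_on K F" and G: "continuous_on K G"
    and FG: "\<And>y. y \<in> K \<Longrightarrow> \<bar>F y - c\<bar> \<le> G y"
  shows "\<bar>Cop muT Mz a n F x - c\<bar> \<le> Cop muT Mz a n G x"
proof -
  have "\<bar>iter_int (muT x) n (\<lambda>s. F ((1 / (real n + a)) *\<^sub>R (s + a *\<^sub>R z))) - c\<bar>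
      \<le> iter_int (muT x) n (\<lambda>s. G ((1 / (real n + a)) *\<^sub>R (s + a *\<^sub>R z)))" if z: "z \<in> K" for z
  proof (rule iter_int_abs_sub_le[OF K(2) M])
    have mem: "(1 / (real n + a)) *\<^sub>R (s + a *\<^sub>R z) \<in> K" if "s \<in> minkowski_power K n" for s
      using scaled_minkowski_power_mem[OF K(1) z a(1) that a(2)] .
    have cont: "continuous_on (minkowski_power K n) (\<lambda>s. H ((1 / (real n + a)) *\<^sub>R (s + a *\<^sub>R z)))"
      if "continuous_on K H" for H
      using mem by (intro continuous_on_compose2[OF that])
        (auto intro!: continuous_on_scaleR_lc continuous_on_add_lc continuous_intros)
    show "continuous_on (minkowski_power K n) (\<lambda>s. F ((1 / (real n + a)) *\<^sub>R (s + a *\<^sub>R z)))"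
      using cont[OF F] .
    show "continuous_on (minkowski_power K n) (\<lambda>s. G ((1 / (real n + a)) *\<^sub>R (s + a *\<^sub>R z)))"
      using cont[OF G] .
    show "\<bar>F ((1 / (real n + a)) *\<^sub>R (s + a *\<^sub>R z)) - c\<bar> \<le> G ((1 / (real n + a)) *\<^sub>R (s + a *\<^sub>R z))"
      if "s \<in> minkowski_power K n" for s
      using FG[OF mem[OF that]] .
  qed
  moreover have "finite_measure Mz" using Mz(1) by (simp add: prob_space_def)
  ultimately show ?thesis
    unfolding Cop_def using space_eq_restrict_borel[OF Mz(2)]
    by (intro abs_integral_sub_le[OF Mz(1)] integrable_continuous_on_compact[OF _ K(2) _ Mz(2)]
        continuous_on_Cop_integrand[OF K M a] F G) auto
qed

lemma sum_integral_squares_le_1: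
  fixes \<Phi> :: "nat \<Rightarrow> 'a::topological_space \<Rightarrow> real"
  assumes K: "compact K" and M: "prob_space M" "sets M = sets (restrict_space borel K)"
    and cont: "\<And>j. j < m \<Longrightarrow> continuous_on K (\<Phi> j)"
    and norm: "\<And>y. y \<in> K \<Longrightarrow> (\<Sum>j<m. (\<Phi> j y)\<^sup>2) \<le> 1"
  shows "(\<Sum>j<m. \<integral>t. (\<Phi> j t)\<^sup>2 \<partial>M) \<le> 1"
proof -
  interpret prob_space M by fact
  have int: "integrable M (\<lambda>t. (\<Phi> j t)\<^sup>2)" if "j < m" for j
    using cont[OF that] K M by (auto intro!: integrable_continuous_on_compact continuous_intros)
  have "(\<Sum>j<m. \<integral>t. (\<Phi> j t)\<^sup>2 \<partial>M) = (\<integral>t. (\<Sum>j<m. (\<Phi> j t)\<^sup>2) \<partial>M)"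
    using int by (simp add: Bochner_Integration.integral_sum)
  also have "\<dots> \<le> (\<integral>t. 1 \<partial>M)"
    using int norm space_eq_restrict_borel[OF M(2)] by (intro integral_mono) auto
  finally show ?thesis by (simp add: prob_space)
qed

lemma sum_square_diff_le_4:
  fixes u v :: "nat \<Rightarrow> real"
  assumes "(\<Sum>j<m. (u j)\<^sup>2) \<le> 1" and "(\<Sum>j<m. (v j)\<^sup>2) \<le> 1"
  shows "(\<Sum>j<m. (u j - v j)\<^sup>2) \<le> 4"
proof -
  have "(\<Sum>j<m. (u j - v j)\<^sup>2) \<le> (\<Sum>j<m. 2 * (u j)\<^sup>2 + 2 * (v j)\<^sup>2)"
    by (intro sum_mono) (smt (verit) zero_le_power2 power2_diff power2_sum)
  also have "\<dots> \<le> 4"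
    using assms by (simp add: sum.distrib sum_distrib_left[symmetric])
  finally show ?thesis .
qed

lemma iter_int_Cop_quadratic_le:
  fixes \<Phi> :: "nat \<Rightarrow> 'a::lc_tvs \<Rightarrow> real"
  assumes K: "compact K" and M: "prob_space M" "sets M = sets (restrict_space borel K)"
    and a: "0 < real n + a"
    and lin: "\<And>j. j < m \<Longrightarrow> linear (\<Phi> j)" and cont: "\<And>j. j < m \<Longrightarrow> continuous_on K (\<Phi> j)"
    and mean: "\<And>j. j < m \<Longrightarrow> (\<integral>t. \<Phi> j t \<partial>M) = \<Phi> j x"
    and norm: "\<And>y. y \<in> K \<Longrightarrow> (\<Sum>j<m. (\<Phi> j y)\<^sup>2) \<le> 1"
    and x: "x \<in> K" and z: "z \<in> K" and \<beta>: "0 \<le> \<beta>"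
  shows "iter_int M n (\<lambda>s. \<alpha> + \<beta> * (\<Sum>j<m. (\<Phi> j ((1 / (real n + a)) *\<^sub>R (s + a *\<^sub>R z)) - \<Phi> j x)\<^sup>2))
    \<le> \<alpha> + \<beta> * ((4 * a\<^sup>2 + real n) / (real n + a)\<^sup>2)"
proof -
  define b where "b j = a * \<Phi> j z - (real n + a) * \<Phi> j x" for j
  define var where "var j = (\<integral>t. (\<Phi> j t)\<^sup>2 \<partial>M) - (\<Phi> j x)\<^sup>2" for j
  have int1: "integrable M (\<Phi> j)" and int2: "integrable M (\<lambda>t. (\<Phi> j t)\<^sup>2)" if "j < m" for j
    using cont[OF that] K M by (auto intro!: integrable_continuous_on_compact continuous_intros
        simp: prob_space_def)
  have "\<Phi> j ((1 / (real n + a)) *\<^sub>R (s + a *\<^sub>R z)) - \<Phi> j x = (\<Phi> j s + b j) / (real n + a)"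
    if "j < m" for j s
  proof -
    have "\<Phi> j ((1 / (real n + a)) *\<^sub>R (s + a *\<^sub>R z)) = (\<Phi> j s + a * \<Phi> j z) / (real n + a)"
      using lin[OF that] by (simp add: linear_add linear_cmul add_divide_distrib)
    then show ?thesis
      using a by (simp add: b_def diff_divide_distrib add_divide_distrib)
  qed
  then have "iter_int M n (\<lambda>s. \<alpha> + \<beta> * (\<Sum>j<m. (\<Phi> j ((1 / (real n + a)) *\<^sub>R (s + a *\<^sub>R z)) - \<Phi> j x)\<^sup>2))
      = iter_int M n (\<lambda>s. \<alpha> + \<beta> / (real n + a)\<^sup>2 * (\<Sum>j<m. (\<Phi> j s + b j)\<^sup>2))"
    by (simp add: power_divide sum_divide_distrib[symmetric])
  also have "\<dots> = \<alpha> + \<beta> / (real n + a)\<^sup>2 * (\<Sum>j<m. (real n * \<Phi> j x + b j)\<^sup>2 + real n * var j)"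
    using iter_int_quadratic[where \<phi>=\<Phi> and m=m and k=n and \<beta>="\<beta> / (real n + a)\<^sup>2" and b=b,
        OF M(1) lin int1 int2] mean
    by (simp add: var_def)
  also have "\<dots> \<le> \<alpha> + \<beta> / (real n + a)\<^sup>2 * (4 * a\<^sup>2 + real n)"
  proof -
    have "a\<^sup>2 * (\<Sum>j<m. (\<Phi> j z - \<Phi> j x)\<^sup>2) \<le> a\<^sup>2 * 4"
      using sum_square_diff_le_4[OF norm[OF z] norm[OF x]] by (simp add: mult_left_mono)
    moreover have "(\<Sum>j<m. (real n * \<Phi> j x + b j)\<^sup>2) = a\<^sup>2 * (\<Sum>j<m. (\<Phi> j z - \<Phi> j x)\<^sup>2)"
      by (simp add: b_def sum_distrib_left power2_eq_square algebra_simps)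
    ultimately have "(\<Sum>j<m. (real n * \<Phi> j x + b j)\<^sup>2) \<le> 4 * a\<^sup>2" by simp
    moreover have "(\<Sum>j<m. real n * var j) \<le> real n"
    proof -
      have "(\<Sum>j<m. real n * var j) \<le> real n * (\<Sum>j<m. \<integral>t. (\<Phi> j t)\<^sup>2 \<partial>M)"
        unfolding var_def sum_distrib_left by (intro sum_mono mult_left_mono) auto
      also have "\<dots> \<le> real n"
        using sum_integral_squares_le_1[OF K M cont norm] by (simp add: mult_left_le)
      finally show ?thesis .
    qed
    ultimately show ?thesis
      using \<beta> by (intro add_left_mono mult_left_mono) (simp_all add: sum.distrib)
  qed
  finally show ?thesis by simp
qed

lemma Cop_quadratic_le:
  fixes muT :: "'a::lc_tvs \<Rightarrow> 'a measure" and \<Phi> :: "nat \<Rightarrow> 'a \<Rightarrow> real"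
  assumes K: "convex K" "compact K"
    and M: "prob_space (muT x)" "sets (muT x) = sets (restrict_space borel K)"
    and Mz: "prob_space Mz" "sets Mz = sets (restrict_space borel K)"
    and a: "0 \<le> a" "0 < real n + a"
    and lin: "\<And>j. j < m \<Longrightarrow> linear (\<Phi> j)" and cont: "\<And>j. j < m \<Longrightarrow> continuous_on K (\<Phi> j)"
    and mean: "\<And>j. j < m \<Longrightarrow> (\<integral>t. \<Phi> j t \<partial>muT x) = \<Phi> j x"
    and norm: "\<And>y. y \<in> K \<Longrightarrow> (\<Sum>j<m. (\<Phi> j y)\<^sup>2) \<le> 1"
    and x: "x \<in> K" and \<beta>: "0 \<le> \<beta>"
  shows "Cop muT Mz a n (\<lambda>y. \<alpha> + \<beta> * (\<Sum>j<m. (\<Phi> j y - \<Phi> j x)\<^sup>2)) x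
    \<le> \<alpha> + \<beta> * ((4 * a\<^sup>2 + real n) / (real n + a)\<^sup>2)"
proof -
  interpret prob_space Mz by fact
  have "continuous_on K (\<lambda>y. \<alpha> + \<beta> * (\<Sum>j<m. (\<Phi> j y - \<Phi> j x)\<^sup>2))"
    using cont by (intro continuous_intros) auto
  then have "integrable Mz (\<lambda>z. iter_int (muT x) n
      (\<lambda>s. \<alpha> + \<beta> * (\<Sum>j<m. (\<Phi> j ((1 / (real n + a)) *\<^sub>R (s + a *\<^sub>R z)) - \<Phi> j x)\<^sup>2)))"
    by (intro integrable_continuous_on_compact[OF _ K(2) _ Mz(2)] continuous_on_Cop_integrand[OF K M a])
      (simp_all add: finite_measure_axioms)
  then have "Cop muT Mz a n (\<lambda>y. \<alpha> + \<beta> * (\<Sum>j<m. (\<Phi> j y - \<Phi> j x)\<^sup>2)) x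
      \<le> (\<integral>z. \<alpha> + \<beta> * ((4 * a\<^sup>2 + real n) / (real n + a)\<^sup>2) \<partial>Mz)"
    unfolding Cop_def using space_eq_restrict_borel[OF Mz(2)]
    by (intro integral_mono iter_int_Cop_quadratic_le[OF K(2) M a(2) lin cont mean norm x _ \<beta>]) auto
  then show ?thesis by (simp add: prob_space)
qed

lemma abs_Cop_sub_le_modulus:
  fixes muT :: "'a::lc_tvs \<Rightarrow> 'a measure" and \<Phi> :: "nat \<Rightarrow> 'a \<Rightarrow> real" and f :: "'a \<Rightarrow> real"
  assumes K: "convex K" "compact K"
    and M: "prob_space (muT x)" "sets (muT x) = sets (restrict_space borel K)"
    and Mz: "prob_space Mz" "sets Mz = sets (restrict_space borel K)"
    and a: "0 \<le> a" and n: "1 \<le> n" and f: "continuous_on K f"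
    and lin: "\<And>j. j < m \<Longrightarrow> linear (\<Phi> j)" and cont: "\<And>j. j < m \<Longrightarrow> continuous_on K (\<Phi> j)"
    and mean: "\<And>j. j < m \<Longrightarrow> (\<integral>t. \<Phi> j t \<partial>muT x) = \<Phi> j x"
    and norm: "\<And>y. y \<in> K \<Longrightarrow> (\<Sum>j<m. (\<Phi> j y)\<^sup>2) \<le> 1"
    and modulus: "\<And>u v. u \<in> K \<Longrightarrow> v \<in> K \<Longrightarrow> (\<Sum>j<m. (\<Phi> j u - \<Phi> j v)\<^sup>2) \<le> \<delta>\<^sup>2 \<Longrightarrow> \<bar>f u - f v\<bar> \<le> w"
    and \<delta>: "\<delta> = sqrt ((4 * a\<^sup>2 + 1) / (real n + a))" and x: "x \<in> K"
  shows "\<bar>Cop muT Mz a n f x - f x\<bar> \<le> 2 * w"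
proof -
  have na: "0 < real n + a" using n a by linarith
  have "0 < (4 * a\<^sup>2 + 1) / (real n + a)"
    using na by (intro divide_pos_pos) (simp_all add: add_nonneg_pos)
  then have \<delta>2: "\<delta>\<^sup>2 = (4 * a\<^sup>2 + 1) / (real n + a)" and "0 < \<delta>"
    by (simp_all add: \<delta>)
  have w: "0 \<le> w" using modulus[OF x x] by simp
  have "\<bar>Cop muT Mz a n f x - f x\<bar> \<le> Cop muT Mz a n (\<lambda>y. w + w / \<delta>\<^sup>2 * (\<Sum>j<m. (\<Phi> j y - \<Phi> j x)\<^sup>2)) x"
  proof (rule abs_Cop_sub_le[where muT=muT and x=x, OF K M Mz a na f])
    show "continuous_on K (\<lambda>y. w + w / \<delta>\<^sup>2 * (\<Sum>j<m. (\<Phi> j y - \<Phi> j x)\<^sup>2))"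
      using cont by (intro continuous_intros) auto
    show "\<bar>f y - f x\<bar> \<le> w + w / \<delta>\<^sup>2 * (\<Sum>j<m. (\<Phi> j y - \<Phi> j x)\<^sup>2)" if "y \<in> K" for y
      using abs_diff_le_modulus_quadratic[where \<phi>=\<Phi> and f=f, OF K(1) lin modulus \<open>0 < \<delta>\<close> x that]
      by (simp add: algebra_simps)
  qed
  also have "\<dots> \<le> w + w / \<delta>\<^sup>2 * ((4 * a\<^sup>2 + real n) / (real n + a)\<^sup>2)"
    by (intro Cop_quadratic_le[where muT=muT and x=x, OF K M Mz a na lin cont mean norm x]
        divide_nonneg_nonneg w zero_le_power2)
  also have "\<dots> \<le> w + w / \<delta>\<^sup>2 * \<delta>\<^sup>2"
  proof -
    have "4 * a\<^sup>2 * 1 \<le> 4 * a\<^sup>2 * real n" using n by (intro mult_left_mono) auto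
    moreover have "(4 * a\<^sup>2 + 1) * (real n + a) = 4 * a\<^sup>2 * real n + 4 * a\<^sup>2 * a + real n + a"
      by (simp add: algebra_simps)
    moreover have "\<delta>\<^sup>2 * (real n + a)\<^sup>2 = (4 * a\<^sup>2 + 1) * (real n + a)"
      unfolding \<delta>2 using na by (simp add: power2_eq_square[of "real n + a"])
    moreover have "0 \<le> 4 * a\<^sup>2 * a" using a by simp
    ultimately have "4 * a\<^sup>2 + real n \<le> \<delta>\<^sup>2 * (real n + a)\<^sup>2"
      using a by linarith
    then have "(4 * a\<^sup>2 + real n) / (real n + a)\<^sup>2 \<le> \<delta>\<^sup>2"
      using na by (simp add: pos_divide_le_eq)
    then show ?thesis using w by (intro add_left_mono mult_left_mono) auto
  qed
  also have "\<dots> = 2 * w" using \<open>0 < \<delta>\<close> by simp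
  finally show ?thesis .
qed

lemma integral_linear_eq_barycenter:
  fixes \<phi> :: "'a::{real_vector,topological_space} \<Rightarrow> real"
  assumes fix_affine: "\<forall>h. affine_cont K h \<longrightarrow> (\<forall>x\<in>K. T h x = h x)"
    and represents: "\<forall>g. continuous_on K g \<longrightarrow> (\<integral>y. g y \<partial>M) = T g x"
    and x: "x \<in> K" and \<phi>: "linear \<phi>" "continuous_on K \<phi>"
  shows "(\<integral>y. \<phi> y \<partial>M) = \<phi> x"
proof -
  have "affine_cont K \<phi>"
    unfolding affine_cont_def using \<phi> by (simp add: linear_add linear_cmul)
  then have "T \<phi> x = \<phi> x" using fix_affine x by blast
  moreover have "(\<integral>y. \<phi> y \<partial>M) = T \<phi> x" using represents \<phi>(2) by blast
  ultimately show ?thesis by simp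
qed

lemma admissible_family_linear:
  assumes "\<forall>j<m. h j \<in> Lfun K" and "sup_norm_on K (\<lambda>x. \<Sum>j<m. (h j x)\<^sup>2) = 1"
  obtains \<Phi> where "\<And>j. j < m \<Longrightarrow> linear (\<Phi> j)" "\<And>j. j < m \<Longrightarrow> continuous_on UNIV (\<Phi> j)"
    "\<And>j y. j < m \<Longrightarrow> y \<in> K \<Longrightarrow> h j y = \<Phi> j y"
    "\<And>y. y \<in> K \<Longrightarrow> (\<Sum>j<m. (\<Phi> j y)\<^sup>2) \<le> 1"
proof -
  have "\<forall>j. \<exists>\<phi>. j < m \<longrightarrow> \<phi> \<in> dual_space \<and> (\<forall>x\<in>K. h j x = \<phi> x)"
    using assms(1) unfolding Lfun_def by blast
  then obtain \<Phi> where \<Phi>: "\<And>j. j < m \<Longrightarrow> \<Phi> j \<in> dual_space \<and> (\<forall>x\<in>K. h j x = \<Phi> j x)"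
    by metis
  show ?thesis
  proof (rule that)
    show "linear (\<Phi> j)" "continuous_on UNIV (\<Phi> j)" if "j < m" for j
      using \<Phi>[OF that] unfolding dual_space_def by auto
    show "h j y = \<Phi> j y" if "j < m" "y \<in> K" for j y
      using \<Phi> that by blast
    show "(\<Sum>j<m. (\<Phi> j y)\<^sup>2) \<le> 1" if y: "y \<in> K" for y
    proof -
      have "ereal \<bar>\<Sum>j<m. (h j y)\<^sup>2\<bar> \<le> 1"
        using assms(2) SUP_upper[OF y, of "\<lambda>x. ereal \<bar>\<Sum>j<m. (h j x)\<^sup>2\<bar>"]
        unfolding sup_norm_on_def by simp
      moreover have "(\<Sum>j<m. (h j y)\<^sup>2) = (\<Sum>j<m. (\<Phi> j y)\<^sup>2)"
        using \<Phi> y by (intro sum.cong) auto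
      ultimately show ?thesis by simp
    qed
  qed
qed

lemma modulus_of_omega_mod:
  assumes "omega_mod K f h m \<delta> = ereal w" "u \<in> K" "v \<in> K" "(\<Sum>j<m. (h j u - h j v)\<^sup>2) \<le> \<delta>\<^sup>2"
  shows "\<bar>f u - f v\<bar> \<le> w"
proof -
  have "(u, v) \<in> Hset K h m \<delta>" using assms(2-4) unfolding Hset_def by simp
  then have "ereal \<bar>f (fst (u, v)) - f (snd (u, v))\<bar> \<le> omega_mod K f h m \<delta>"
    unfolding omega_mod_def by (rule SUP_upper)
  then show ?thesis using assms(1) by simp
qed

lemma le_twice_INF_ereal:
  fixes S :: ereal
  assumes "\<And>i. i \<in> I \<Longrightarrow> S \<le> 2 * g i"
  shows "S \<le> 2 * (INF i\<in>I. g i)"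
proof -
  have "S / 2 \<le> g i" if "i \<in> I" for i
    using assms[OF that] by (cases S; cases "g i") (auto simp: field_simps)
  then have "2 * (S / 2) \<le> 2 * (INF i\<in>I. g i)"
    by (intro ereal_mult_left_mono INF_greatest) auto
  moreover have "2 * (S / 2) = S" by (cases S) auto
  ultimately show ?thesis by simp
qed

lemma sup_norm_on_le_twice_Omega:
  fixes g :: "'a::lc_tvs \<Rightarrow> real"
  assumes "\<And>m h w x. 1 \<le> m \<Longrightarrow> \<forall>j<m. h j \<in> Lfun K \<Longrightarrow> sup_norm_on K (\<lambda>x. \<Sum>j<m. (h j x)\<^sup>2) = 1 \<Longrightarrow>
    omega_mod K f h m \<delta> = ereal w \<Longrightarrow> x \<in> K \<Longrightarrow> \<bar>g x\<bar> \<le> 2 * w"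
  shows "sup_norm_on K g \<le> 2 * Omega K f \<delta>"
  unfolding Omega_def
proof (rule le_twice_INF_ereal, clarify)
  fix m :: nat and h :: "nat \<Rightarrow> 'a \<Rightarrow> real"
  assume mh: "1 \<le> m" "\<forall>j<m. h j \<in> Lfun K" "sup_norm_on K (\<lambda>x. \<Sum>j<m. (h j x)\<^sup>2) = 1"
  show "sup_norm_on K g \<le> 2 * omega_mod K f (snd (m, h)) (fst (m, h)) \<delta>"
  proof (cases "omega_mod K f h m \<delta>")
    case (real w)
    have "sup_norm_on K g \<le> ereal (2 * w)"
      unfolding sup_norm_on_def by (rule SUP_least) (simp add: assms[OF mh real])
    then show ?thesis using real by simp
  next
    case PInf
    then show ?thesis by simp
  next
    case MInf
    have "K = {}"
    proof (rule ccontr)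
      assume "K \<noteq> {}"
      then obtain x where "(x, x) \<in> Hset K h m \<delta>" unfolding Hset_def by auto
      then have "ereal \<bar>f (fst (x, x)) - f (snd (x, x))\<bar> \<le> omega_mod K f h m \<delta>"
        unfolding omega_mod_def by (rule SUP_upper)
      with MInf show False by simp
    qed
    then show ?thesis by (simp add: sup_norm_on_def)
  qed
qed

theorem proposition3p3:
  fixes K :: "'a::lc_tvs set"
    and T :: "('a \<Rightarrow> real) \<Rightarrow> ('a \<Rightarrow> real)"
    and muT :: "'a \<Rightarrow> 'a measure"
    and a :: real
    and mu :: "nat \<Rightarrow> 'a measure"
    and n :: nat
    and f :: "'a \<Rightarrow> real"
  assumes "convex K" and "compact K"
    and "markov_operator K T"
    and "\<forall>h. affine_cont K h \<longrightarrow> (\<forall>x\<in>K. T h x = h x)"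
    and "\<forall>x\<in>K. borel_prob_on K (muT x)"
    and "\<forall>x\<in>K. \<forall>g. continuous_on K g \<longrightarrow> (\<integral>y. g y \<partial>(muT x)) = T g x"
    and "0 \<le> a"
    and "\<forall>k\<ge>1. borel_prob_on K (mu k)"
    and "1 \<le> n"
    and "continuous_on K f"
  shows "sup_norm_on K (\<lambda>x. Cop muT (mu n) a n f x - f x)
           \<le> 2 * Omega K f (sqrt ((4 * a\<^sup>2 + 1) / (real n + a)))"
proof (rule sup_norm_on_le_twice_Omega)
  fix m :: nat and h :: "nat \<Rightarrow> 'a \<Rightarrow> real" and w :: real and x :: 'a
  assume h: "\<forall>j<m. h j \<in> Lfun K" "sup_norm_on K (\<lambda>x. \<Sum>j<m. (h j x)\<^sup>2) = 1"
    and w: "omega_mod K f h m (sqrt ((4 * a\<^sup>2 + 1) / (real n + a))) = ereal w" and x: "x \<in> K"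
  obtain \<Phi> where lin: "\<And>j. j < m \<Longrightarrow> linear (\<Phi> j)" and cont: "\<And>j. j < m \<Longrightarrow> continuous_on UNIV (\<Phi> j)"
    and h\<Phi>: "\<And>j y. j < m \<Longrightarrow> y \<in> K \<Longrightarrow> h j y = \<Phi> j y"
    and norm: "\<And>y. y \<in> K \<Longrightarrow> (\<Sum>j<m. (\<Phi> j y)\<^sup>2) \<le> 1"
    using admissible_family_linear[OF h] by blast
  have contK: "continuous_on K (\<Phi> j)" if "j < m" for j
    using continuous_on_subset[OF cont[OF that]] by simp
  have M: "prob_space (muT x)" "sets (muT x) = sets (restrict_space borel K)"
    and Mz: "prob_space (mu n)" "sets (mu n) = sets (restrict_space borel K)"
    using assms(5,8,9) x unfolding borel_prob_on_def by auto
  have mean: "(\<integral>t. \<Phi> j t \<partial>muT x) = \<Phi> j x" if "j < m" for j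
    using assms(4,6) x lin contK that by (intro integral_linear_eq_barycenter[where T=T]) auto
  have modulus: "\<bar>f u - f v\<bar> \<le> w" if "u \<in> K" "v \<in> K"
    "(\<Sum>j<m. (\<Phi> j u - \<Phi> j v)\<^sup>2) \<le> (sqrt ((4 * a\<^sup>2 + 1) / (real n + a)))\<^sup>2" for u v
    using modulus_of_omega_mod[OF w that(1,2)] that h\<Phi> by simp
  show "\<bar>Cop muT (mu n) a n f x - f x\<bar> \<le> 2 * w"
    using abs_Cop_sub_le_modulus[where muT=muT and x=x, OF assms(1,2) M Mz assms(7,9,10)
        lin contK mean norm modulus refl x] .
qed

end
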